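(* Assume the standing setting and let $\epsilon>0$. If $|u^0_i-u^0_{i+1}|\le \epsilon/3^{M}$ for all $i\in\mathbb Z$, then for every $j\in\mathbb Z$, $|w^N_j-w^N_{j+1}|\le\epsilon$ (i.e. $|d_1-d_2|\le\epsilon$ with $d_1=w^N_j$, $d_2=w^N_{j+1}$).
   Context: Standing setting. Let $F:\mathbb R\to\mathbb R$ be continuously differentiable. For a spatial step $\eta>0$, a time step $\tau>0$ and an initial sequence $(z^0_i)_{i\in\mathbb Z}$ of reals, the EFC (Euler forward in time, centered in space) scheme produces $(z^n_i)_{i\in\mathbb Z,\,n\in\mathbb N}$ by $z^{n+1}_i=z^n_i-F'(z^n_i)\frac{\tau}{2\eta}\,(z^n_{i+1}-z^n_{i-1})$. It satisfies the CFL condition if $|F'(z^n_i)|\,\tau/\eta\le 1$ for all $i\in\mathbb Z$, $n\in\mathbb N$. Fix $a\in\mathbb R$, $h>0$, $\Delta t>0$, an integer $N>1$ and an even integer $r\ge 2$; put $k=h/r$, $dt=\Delta t/r$, $M=Nr$. Let $u_0:\mathbb R\to\mathbb R$. The coarse solution $(w^n_j)$ is the EFC scheme with $\eta=h$, $\tau=\Delta t$, $w^0_j=u_0(a+jh)$; the fine solution $(u^n_i)$ is the EFC scheme with $\eta=k$, $\tau=dt$, $u^0_i=u_0(a+ik)$ (so $w^0_j=u^0_{jr}$). Both are assumed to satisfy the CFL condition. *)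

theory Defs
  imports "HOL-Analysis.Analysis"
begin

text \<open>EFC scheme (Euler forward in time, centered in space).
  efc F' eta tau z0 n i = z^n_i, where F' is the derivative of the flux F.\<close>
fun efc :: "(real \<Rightarrow> real) \<Rightarrow> real \<Rightarrow> real \<Rightarrow> (int \<Rightarrow> real) \<Rightarrow> nat \<Rightarrow> int \<Rightarrow> real" where
  "efc F' eta tau z0 0 i = z0 i"
| "efc F' eta tau z0 (Suc n) i =
     efc F' eta tau z0 n i
     - F' (efc F' eta tau z0 n i) * (tau / (2 * eta))
       * (efc F' eta tau z0 n (i + 1) - efc F' eta tau z0 n (i - 1))"

definition CFL :: "(real \<Rightarrow> real) \<Rightarrow> real \<Rightarrow> real \<Rightarrow> (int \<Rightarrow> real) \<Rightarrow> bool" where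
  "CFL F' eta tau z0 \<longleftrightarrow> (\<forall>n i. \<bar>F' (efc F' eta tau z0 n i)\<bar> * tau / eta \<le> 1)"

end

theory Submission
  imports Defs
begin

text \<open>The coarse initial data samples the fine initial data at every r-th node, so by
  telescoping its jumps are at most r \<epsilon> / 3^(N r). Under the CFL condition each EFC step is a
  centred update whose coefficients are bounded by 1/2, which at most triples the largest jump.
  Hence the jumps of w^N are at most 3^N r \<epsilon> / 3^(N r) \<le> \<epsilon>.\<close>

lemma abs_diff_le_of_step_bound:
  fixes g :: "int \<Rightarrow> 'a::linordered_idom"
  assumes step: "\<And>i. \<bar>g i - g (i + 1)\<bar> \<le> d"
  shows "\<bar>g i - g (i + int m)\<bar> \<le> of_nat m * d"
proof (induction m)
  case 0
  then show ?case by simp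
next
  case (Suc m)
  have "\<bar>g i - g (i + int (Suc m))\<bar> \<le> \<bar>g i - g (i + int m)\<bar> + \<bar>g (i + int m) - g (i + int m + 1)\<bar>"
    by (simp add: add_ac)
  also have "\<dots> \<le> of_nat m * d + d"
    using Suc.IH step[of "i + int m"] by (rule add_mono)
  finally show ?case
    by (simp add: algebra_simps)
qed

lemma centred_step_abs_diff_le:
  fixes z c :: "int \<Rightarrow> real"
  assumes c_bound: "\<And>i. \<bar>c i\<bar> \<le> 1 / 2"
    and z_step: "\<And>i. \<bar>z i - z (i + 1)\<bar> \<le> B"
  shows "\<bar>(z j - c j * (z (j + 1) - z (j - 1))) - (z (j + 1) - c (j + 1) * (z (j + 2) - z j))\<bar>
    \<le> 3 * B"
proof -
  have B_nonneg: "0 \<le> B"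
    using z_step[of 0] by linarith
  have "\<bar>z (k + 1) - z (k - 1)\<bar> \<le> 2 * B" for k
    using z_step[of "k - 1"] z_step[of k] by simp
  then have "\<bar>c k * (z (k + 1) - z (k - 1))\<bar> \<le> 1 / 2 * (2 * B)" for k
    unfolding abs_mult using c_bound B_nonneg by (intro mult_mono) auto
  from this[of j] this[of "j + 1"] z_step[of j] show ?thesis
    by (simp add: algebra_simps)
qed

lemma CFL_coefficient_bound:
  assumes "CFL F' eta tau z0" "eta > 0" "tau > 0"
  shows "\<bar>F' (efc F' eta tau z0 n i) * (tau / (2 * eta))\<bar> \<le> 1 / 2"
proof -
  have "\<bar>F' (efc F' eta tau z0 n i)\<bar> * tau / eta \<le> 1"
    using assms(1) unfolding CFL_def by blast
  then show ?thesis
    using assms(2,3) by (simp add: abs_mult field_simps)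
qed

lemma efc_abs_diff_le:
  assumes "CFL F' eta tau z0" "eta > 0" "tau > 0"
    and init: "\<And>i. \<bar>z0 i - z0 (i + 1)\<bar> \<le> B"
  shows "\<bar>efc F' eta tau z0 n j - efc F' eta tau z0 n (j + 1)\<bar> \<le> 3 ^ n * B"
proof (induction n arbitrary: j)
  case 0
  then show ?case using init by simp
next
  case (Suc n)
  let ?z = "efc F' eta tau z0 n"
  have "\<bar>(?z j - F' (?z j) * (tau / (2 * eta)) * (?z (j + 1) - ?z (j - 1)))
      - (?z (j + 1) - F' (?z (j + 1)) * (tau / (2 * eta)) * (?z (j + 2) - ?z j))\<bar> \<le> 3 * (3 ^ n * B)"
    using CFL_coefficient_bound[OF assms(1-3)] Suc.IH by (rule centred_step_abs_diff_le)
  then show ?case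
    by (simp add: add.assoc)
qed

lemma mult_three_power_le_three_power_mult:
  assumes "N \<ge> 1"
  shows "r * 3 ^ N \<le> (3::nat) ^ (N * r)"
proof (cases r)
  case 0
  then show ?thesis by simp
next
  case (Suc q)
  have "r * 3 ^ N \<le> 3 ^ q * 3 ^ N"
    using Suc by (intro mult_le_mono1) (simp add: Suc_leI power_gt_expt)
  also have "\<dots> = 3 ^ (q + N)"
    by (simp add: power_add)
  also have "\<dots> \<le> 3 ^ (N * r)"
    using Suc assms by (intro power_increasing) auto
  finally show ?thesis .
qed

theorem corollary2:
  fixes F F' :: "real \<Rightarrow> real" and u0 :: "real \<Rightarrow> real"
    and a h \<Delta>t \<epsilon> :: real and N r :: nat
  assumes F_deriv: "\<And>x. (F has_real_derivative F' x) (at x)"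
    and F'_cont: "continuous_on UNIV F'"
    and h_pos: "h > 0" and dt_pos: "\<Delta>t > 0"
    and N_gt: "N > 1" and r_even: "even r" and r_ge: "r \<ge> 2"
    and eps_pos: "\<epsilon> > 0"
    and CFL_coarse: "CFL F' h \<Delta>t (\<lambda>j. u0 (a + real_of_int j * h))"
    and CFL_fine: "CFL F' (h / real r) (\<Delta>t / real r) (\<lambda>i. u0 (a + real_of_int i * (h / real r)))"
    and small: "\<And>i::int. \<bar>efc F' (h / real r) (\<Delta>t / real r) (\<lambda>i. u0 (a + real_of_int i * (h / real r))) 0 i
                      - efc F' (h / real r) (\<Delta>t / real r) (\<lambda>i. u0 (a + real_of_int i * (h / real r))) 0 (i + 1)\<bar>
                    \<le> \<epsilon> / 3 ^ (N * r)"
  shows "\<forall>j::int. \<bar>efc F' h \<Delta>t (\<lambda>j. u0 (a + real_of_int j * h)) N j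
                   - efc F' h \<Delta>t (\<lambda>j. u0 (a + real_of_int j * h)) N (j + 1)\<bar> \<le> \<epsilon>"
proof
  fix j :: int
  let ?fine = "\<lambda>i. u0 (a + real_of_int i * (h / real r))"
  let ?coarse = "\<lambda>j. u0 (a + real_of_int j * h)"
  have sample: "?coarse k = ?fine (k * int r)" for k
    using r_ge by simp
  have fine_step: "\<bar>?fine i - ?fine (i + 1)\<bar> \<le> \<epsilon> / 3 ^ (N * r)" for i
    using small[of i] by simp
  have "\<bar>?coarse k - ?coarse (k + 1)\<bar> \<le> real r * (\<epsilon> / 3 ^ (N * r))" for k
    using abs_diff_le_of_step_bound[of ?fine, OF fine_step, of "k * int r" r]
    unfolding sample[of k] sample[of "k + 1"] by (simp only: distrib_right mult_1)
  then have "\<bar>efc F' h \<Delta>t ?coarse N j - efc F' h \<Delta>t ?coarse N (j + 1)\<bar>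
      \<le> 3 ^ N * (real r * (\<epsilon> / 3 ^ (N * r)))"
    by (rule efc_abs_diff_le[OF CFL_coarse h_pos dt_pos])
  also have "\<dots> = real r * 3 ^ N / 3 ^ (N * r) * \<epsilon>"
    by simp
  also have "\<dots> \<le> \<epsilon>"
  proof (rule mult_left_le_one_le)
    have "real (r * 3 ^ N) \<le> real (3 ^ (N * r))"
      using N_gt by (intro of_nat_mono mult_three_power_le_three_power_mult) simp
    then show "real r * 3 ^ N / 3 ^ (N * r) \<le> 1"
      by simp
  qed (use eps_pos in simp_all)
  finally show "\<bar>efc F' h \<Delta>t ?coarse N j - efc F' h \<Delta>t ?coarse N (j + 1)\<bar> \<le> \<epsilon>" .
qed

end
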